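(* Let $n\ge 3$, $0<m<\frac{n-2}{n}$, $m\ne\frac{n-2}{n+2}$, $\lambda>0$, $\beta>0$. Let $v$ be the radially symmetric solution described in the context, $w(s)=r^2v(r)^{1-m}$ with $s=\log r$, $h(s)=w(s)-\frac{2(n-1)(n-2-nm)}{(1-m)\beta}s$, and \[ h_1(s)=h(s)+\frac{(n-1)[n-2-(n+2)m]}{(1-m)\beta}\log s . \] Then \[ \lim_{s\to\infty}\frac{s^2h_{1,s}(s)}{\log s}=-\frac{(n-1)(n-2-(n+2)m)^2}{2(n-2-nm)(1-m)\beta}. \]
   Context: $v=v(r)$, $r=|x|$, is the unique radially symmetric positive classical solution of $\frac{n-1}{m}\Delta v^m+\frac{2\beta}{1-m}v+\beta x\cdot\nabla v=0$ in $\mathbb{R}^n$ with $v(0)=\lambda$. $h_{1,s}$ denotes the derivative of $h_1$ in $s$. *)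

theory Defs
  imports "HOL-Analysis.Analysis"
begin

definition pdiff :: "'n::finite \<Rightarrow> (real^'n \<Rightarrow> real) \<Rightarrow> real^'n \<Rightarrow> real" where
  "pdiff i f x = deriv (\<lambda>t. f (x + t *\<^sub>R axis i 1)) 0"

definition C1_Rn :: "(real^'n::finite \<Rightarrow> real) \<Rightarrow> bool" where
  "C1_Rn f \<longleftrightarrow> (\<forall>i x. (\<lambda>t. f (x + t *\<^sub>R axis i 1)) differentiable (at 0))
               \<and> (\<forall>i. continuous_on UNIV (pdiff i f))"

definition C2_Rn :: "(real^'n::finite \<Rightarrow> real) \<Rightarrow> bool" where
  "C2_Rn f \<longleftrightarrow> C1_Rn f \<and> (\<forall>i. C1_Rn (pdiff i f))"

definition laplacian :: "(real^'n::finite \<Rightarrow> real) \<Rightarrow> real^'n \<Rightarrow> real" where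
  "laplacian f x = (\<Sum>i\<in>UNIV. pdiff i (pdiff i f) x)"

definition radial_solution :: "real \<Rightarrow> real \<Rightarrow> real \<Rightarrow> (real^'n::finite \<Rightarrow> real) \<Rightarrow> bool" where
  "radial_solution m \<beta> lam V \<longleftrightarrow>
     (\<forall>x. V x > 0) \<and> C1_Rn V \<and> C2_Rn (\<lambda>y. V y powr m) \<and> V 0 = lam \<and>
     (\<forall>x y. norm x = norm y \<longrightarrow> V x = V y) \<and>
     (\<forall>x. (real CARD('n) - 1) / m * laplacian (\<lambda>y. V y powr m) x
           + 2 * \<beta> / (1 - m) * V x + \<beta> * (\<Sum>i\<in>UNIV. x $ i * pdiff i V x) = 0)"

end

(* In the variable s = ln r, the function w = r^2 v^(1-m) and y = w'/w satisfy the autonomous system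
     w' = w y,   y' = - p (y - 2)^2 - (n - 2) (y - 2) - b w y,   p = m/(1-m),  b = beta/(n-1).
   Since w -> 0 as s -> -infinity, y becomes positive and stays so; then w increases to infinity
   and y -> 0. The derivative z = w y of w relaxes to a0 = c0/b on the time scale 1/w, so w ~ a0 s.
   The quantity psi = s^2 z'/w satisfies a linear equation with damping -b w, hence stays bounded;
   this gives s (z - a0) -> b0 and w = a0 s + b0 ln s + o(ln s). Since h1' = w y - a0 - b0/s,
   substituting both expansions into s^2 h1' / ln s produces the limit -b0^2/a0. *)

theory Submission
  imports Defs
begin

lemma eventually_le_if_deriv_le_neg_above:
  fixes u u' :: "real \<Rightarrow> real"
  assumes deriv: "eventually (\<lambda>s. (u has_real_derivative u' s) (at s)) at_top"
    and decrease: "eventually (\<lambda>s. u s > C \<longrightarrow> u' s \<le> -\<delta>) at_top"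
    and "\<delta> > 0"
  shows "eventually (\<lambda>s. u s \<le> C) at_top"
proof -
  obtain s0 where s0: "\<And>s. s \<ge> s0 \<Longrightarrow>
      (u has_real_derivative u' s) (at s) \<and> (u s > C \<longrightarrow> u' s \<le> -\<delta>)"
    using eventually_conj[OF deriv decrease] unfolding eventually_at_top_linorder by blast
  have drop: "u b \<le> u a - \<delta> * (b - a)"
    if ab: "s0 \<le> a" "a < b" and above: "\<And>x. a < x \<Longrightarrow> x < b \<Longrightarrow> u x > C" for a b
  proof -
    obtain x where x: "a < x" "x < b" "u b - u a = (b - a) * u' x"
      using MVT2[OF \<open>a < b\<close>, of u u'] s0 ab by force
    have "u' x \<le> -\<delta>" using s0[of x] above[OF x(1,2)] ab x by auto
    hence "(b - a) * u' x \<le> (b - a) * (-\<delta>)" using ab by (intro mult_left_mono) auto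
    thus ?thesis using x by (simp add: algebra_simps)
  qed
  define T where "T = s0 + \<bar>u s0 - C\<bar> / \<delta> + 1"
  have "u s \<le> C" if sT: "s \<ge> T" for s
  proof (rule ccontr)
    assume "\<not> u s \<le> C"
    have ss0: "s0 < s" using sT \<open>\<delta> > 0\<close> unfolding T_def by (smt (verit) divide_nonneg_pos)
    have cont: "continuous_on {s0..s} u"
      using s0 by (intro continuous_at_imp_continuous_on ballI DERIV_isCont) force
    \<comment> \<open>the last time before s at which u is at most C, or s0 if there is none\<close>
    define A where "A = insert s0 ({s0..s} \<inter> u -` {..C})"
    define t where "t = Sup A"
    have bdd: "bdd_above A" unfolding A_def using ss0 by (intro bdd_aboveI[of _ s]) auto
    have "closed A"
      unfolding A_def by (intro closed_insert continuous_closed_preimage[OF cont]) auto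
    hence "t \<in> A" unfolding t_def using bdd by (intro closed_contains_Sup) (auto simp: A_def)
    hence t: "s0 \<le> t" "t \<le> s" "t = s0 \<or> u t \<le> C" using ss0 unfolding A_def by auto
    have above: "u x > C" if "t < x" "x \<le> s" for x
      using cSup_upper[OF _ bdd, of x] that t unfolding A_def t_def by fastforce
    have "t < s" using t ss0 \<open>\<not> u s \<le> C\<close> by (cases "t = s") auto
    hence "u s \<le> u t - \<delta> * (s - t)" using drop[OF t(1)] above by simp
    moreover have "\<delta> * (s - s0) \<ge> \<bar>u s0 - C\<bar> + \<delta>"
      using sT \<open>\<delta> > 0\<close> unfolding T_def by (simp add: field_simps)
    ultimately show False using t \<open>t < s\<close> \<open>\<delta> > 0\<close> \<open>\<not> u s \<le> C\<close>
      by (smt (verit) mult_pos_pos)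
  qed
  thus ?thesis unfolding eventually_at_top_linorder by blast
qed

lemma pos_if_deriv_pos_at_zeros:
  fixes u u' :: "real \<Rightarrow> real"
  assumes deriv: "\<And>s. s \<ge> s0 \<Longrightarrow> (u has_real_derivative u' s) (at s)"
    and "u s0 > 0" and at_zero: "\<And>s. s \<ge> s0 \<Longrightarrow> u s = 0 \<Longrightarrow> u' s > 0"
    and "s1 \<ge> s0"
  shows "u s1 > 0"
proof (rule ccontr)
  assume "\<not> u s1 > 0"
  have cont: "continuous_on {s0..s1} u"
    using deriv by (intro continuous_at_imp_continuous_on ballI DERIV_isCont) force
  define A where "A = {s0..s1} \<inter> u -` {..0}"
  define t where "t = Inf A"
  have bdd: "bdd_below A" unfolding A_def by (intro bdd_belowI[of _ s0]) auto
  have "closed A" unfolding A_def by (intro continuous_closed_preimage[OF cont]) auto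
  hence "t \<in> A" unfolding t_def using bdd \<open>\<not> u s1 > 0\<close> \<open>s1 \<ge> s0\<close>
    by (intro closed_contains_Inf) (auto simp: A_def)
  hence t: "s0 \<le> t" "u t \<le> 0" unfolding A_def by auto
  have pos_before: "u x > 0" if "s0 \<le> x" "x < t" for x
    using cInf_lower[OF _ bdd, of x] that t \<open>t \<in> A\<close> unfolding A_def t_def by fastforce
  have "s0 < t" using t \<open>u s0 > 0\<close> by (cases "s0 = t") auto
  have "(u \<longlongrightarrow> u t) (at_left t)"
    using deriv[OF t(1)] by (intro filterlim_at_split[THEN iffD1, THEN conjunct1] DERIV_isCont[THEN isContD])
  moreover have "eventually (\<lambda>x. u x > 0) (at_left t)"
    using eventually_at_left_real[OF \<open>s0 < t\<close>] by eventually_elim (use pos_before in auto)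
  ultimately have "u t \<ge> 0" by (intro tendsto_lowerbound) (auto elim: eventually_mono)
  hence "u t = 0" using t by simp
  obtain d where "d > 0" and left_neg: "\<And>h. 0 < h \<Longrightarrow> h < d \<Longrightarrow> u (t - h) < 0"
    using DERIV_pos_inc_left[OF deriv[OF t(1)] at_zero[OF t(1) \<open>u t = 0\<close>]] \<open>u t = 0\<close> by force
  define h where "h = min (d / 2) ((t - s0) / 2)"
  have "0 < h" "h < d" "s0 \<le> t - h"
    using \<open>d > 0\<close> \<open>s0 < t\<close> unfolding h_def by (auto simp: min_def field_simps)
  thus False using left_neg pos_before[of "t - h"] by force
qed

lemma eventually_le_of_relaxation:
  fixes u u' w R :: "real \<Rightarrow> real"
  assumes deriv: "eventually (\<lambda>s. (u has_real_derivative u' s) (at s)) at_top"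
    and relax: "eventually (\<lambda>s. u' s \<le> w s * (R s - b * u s)) at_top"
    and w: "filterlim w at_top at_top" and R: "(R \<longlongrightarrow> c) at_top"
    and "b > 0" "\<epsilon> > 0"
  shows "eventually (\<lambda>s. u s \<le> c / b + \<epsilon>) at_top"
proof (rule eventually_le_if_deriv_le_neg_above[OF deriv _ zero_less_one])
  have "eventually (\<lambda>s. R s < c + b * \<epsilon> / 2) at_top"
    using R \<open>b > 0\<close> \<open>\<epsilon> > 0\<close> by (intro order_tendstoD(2)) auto
  moreover have "eventually (\<lambda>s. w s \<ge> 2 / (b * \<epsilon>)) at_top"
    using w by (simp add: filterlim_at_top)
  ultimately show "eventually (\<lambda>s. u s > c / b + \<epsilon> \<longrightarrow> u' s \<le> -1) at_top"
    using relax
  proof eventually_elim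
    case (elim s)
    show ?case
    proof
      assume "u s > c / b + \<epsilon>"
      hence "R s - b * u s \<le> - (b * \<epsilon> / 2)"
        using elim \<open>b > 0\<close> by (simp add: field_simps)
      moreover have "w s > 0"
        using elim \<open>b > 0\<close> \<open>\<epsilon> > 0\<close> by (smt (verit) divide_pos_pos mult_pos_pos)
      ultimately have "w s * (R s - b * u s) \<le> w s * - (b * \<epsilon> / 2)"
        by (intro mult_left_mono) auto
      also have "\<dots> \<le> 2 / (b * \<epsilon>) * - (b * \<epsilon> / 2)"
        using elim \<open>b > 0\<close> \<open>\<epsilon> > 0\<close> by (intro mult_right_mono_neg) auto
      finally show "u' s \<le> -1" using elim \<open>b > 0\<close> \<open>\<epsilon> > 0\<close> by simp
    qed
  qed
qed

lemma tendsto_of_relaxation: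
  fixes u w R :: "real \<Rightarrow> real"
  assumes deriv: "eventually (\<lambda>s. (u has_real_derivative w s * (R s - b * u s)) (at s)) at_top"
    and w: "filterlim w at_top at_top" and R: "(R \<longlongrightarrow> c) at_top" and "b > 0"
  shows "(u \<longlongrightarrow> c / b) at_top"
proof (rule order_tendstoI)
  fix a assume "a > c / b"
  have "eventually (\<lambda>s. u s \<le> c / b + (a - c / b) / 2) at_top"
    using \<open>a > c / b\<close> by (intro eventually_le_of_relaxation[OF deriv _ w R \<open>b > 0\<close>]) auto
  moreover have "c / b + (a - c / b) / 2 < a" using \<open>a > c / b\<close> by (simp add: field_simps)
  ultimately show "eventually (\<lambda>s. u s < a) at_top"
    by (auto elim: eventually_mono)
next
  fix a assume "a < c / b"
  have "eventually (\<lambda>s. - u s \<le> - c / b + (c / b - a) / 2) at_top"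
  proof (rule eventually_le_of_relaxation[OF _ _ w tendsto_minus[OF R] \<open>b > 0\<close>])
    show "eventually (\<lambda>s. ((\<lambda>s. - u s) has_real_derivative - (w s * (R s - b * u s))) (at s)) at_top"
      using deriv by eventually_elim (rule DERIV_minus)
  qed (use \<open>a < c / b\<close> in \<open>auto simp: algebra_simps\<close>)
  moreover have "- c / b + (c / b - a) / 2 < - a" using \<open>a < c / b\<close> by (simp add: field_simps)
  ultimately show "eventually (\<lambda>s. a < u s) at_top"
    by (auto elim: eventually_mono)
qed

lemma eventually_le_if_deriv_damped:
  fixes u D g :: "real \<Rightarrow> real"
  assumes deriv: "eventually (\<lambda>s. (u has_real_derivative u s * D s - g s) (at s)) at_top"
    and D: "filterlim D at_bot at_top" and g: "(g \<longlongrightarrow> l) at_top"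
  shows "eventually (\<lambda>s. u s \<le> \<bar>l\<bar> + 2) at_top"
proof (rule eventually_le_if_deriv_le_neg_above[OF deriv _ zero_less_one])
  have "eventually (\<lambda>s. D s \<le> -1) at_top" using D by (simp add: filterlim_at_bot)
  moreover have "eventually (\<lambda>s. g s > l - 1) at_top" using g by (intro order_tendstoD(1)) auto
  ultimately show "eventually (\<lambda>s. u s > \<bar>l\<bar> + 2 \<longrightarrow> u s * D s - g s \<le> -1) at_top"
  proof eventually_elim
    case (elim s)
    show ?case
    proof
      assume "u s > \<bar>l\<bar> + 2"
      hence "u s * D s \<le> u s * -1" using elim by (intro mult_left_mono) auto
      thus "u s * D s - g s \<le> -1" using elim \<open>u s > \<bar>l\<bar> + 2\<close> by linarith
    qed
  qed
qed

lemma bounded_if_deriv_damped: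
  fixes u D g :: "real \<Rightarrow> real"
  assumes deriv: "eventually (\<lambda>s. (u has_real_derivative u s * D s - g s) (at s)) at_top"
    and D: "filterlim D at_bot at_top" and g: "(g \<longlongrightarrow> l) at_top"
  shows "eventually (\<lambda>s. \<bar>u s\<bar> \<le> \<bar>l\<bar> + 2) at_top"
proof -
  have "eventually (\<lambda>s. - u s \<le> \<bar>- l\<bar> + 2) at_top"
  proof (rule eventually_le_if_deriv_damped[OF _ D tendsto_minus[OF g]])
    show "eventually (\<lambda>s. ((\<lambda>s. - u s) has_real_derivative - u s * D s - - g s) (at s)) at_top"
      using deriv by eventually_elim (auto dest: DERIV_minus)
  qed
  with eventually_le_if_deriv_damped[OF deriv D g] show ?thesis
    by eventually_elim auto
qed

lemma bounded_divide_tendsto_0: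
  fixes f g :: "real \<Rightarrow> real"
  assumes f: "eventually (\<lambda>s. \<bar>f s\<bar> \<le> C) at_top" and g: "filterlim g at_top at_top"
  shows "((\<lambda>s. f s / g s) \<longlongrightarrow> 0) at_top"
proof (rule Lim_null_comparison)
  have "eventually (\<lambda>s. g s > 0) at_top"
    using g unfolding filterlim_at_top_dense by blast
  with f show "eventually (\<lambda>s. norm (f s / g s) \<le> C / g s) at_top"
    by eventually_elim (simp add: abs_divide divide_right_mono)
  show "((\<lambda>s. C / g s) \<longlongrightarrow> 0) at_top"
    by (intro tendsto_divide_0[OF tendsto_const] filterlim_at_top_imp_at_infinity g)
qed

locale wy_system =
  fixes p b n :: real and w y :: "real \<Rightarrow> real"
  assumes p_pos: "p > 0" and b_pos: "b > 0" and n_gt: "n - 2 - 2 * p > 0"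
    and w_pos: "\<And>s. w s > 0"
    and w_deriv: "\<And>s. (w has_real_derivative w s * y s) (at s)"
    and y_deriv: "\<And>s. (y has_real_derivative
           - p * (y s - 2)\<^sup>2 - (n - 2) * (y s - 2) - b * w s * y s) (at s)"
    and w_tendsto_at_bot: "(w \<longlongrightarrow> 0) at_bot"
begin

definition c0 :: real where "c0 = 2 * (n - 2) - 4 * p"

definition Q :: "real \<Rightarrow> real" where "Q t = - p * (t - 2)\<^sup>2 - (n - 2) * (t - 2)"

lemma c0_pos: "c0 > 0"
  using n_gt unfolding c0_def by simp

lemma Q_eq: "Q t = c0 - (n - 2 - 4 * p) * t - p * t\<^sup>2"
  unfolding Q_def c0_def by (simp add: power2_eq_square algebra_simps)

lemma y_deriv_Q: "(y has_real_derivative Q (y s) - b * w s * y s) (at s)"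
  using y_deriv unfolding Q_def by simp

lemma Q_le: "Q t \<le> (n - 2)\<^sup>2 / (4 * p)"
proof -
  have "0 \<le> p * (t - 2 + (n - 2) / (2 * p))\<^sup>2" using p_pos by simp
  also have "\<dots> = (n - 2)\<^sup>2 / (4 * p) - Q t"
    using p_pos unfolding Q_def by (simp add: power2_eq_square field_simps)
  finally show ?thesis by simp
qed

lemma Q_ge_on_unit_interval:
  assumes "0 \<le> t" "t \<le> 1"
  shows "Q t \<ge> c0 - (\<bar>n - 2 - 4 * p\<bar> + p) * t"
proof -
  have "(n - 2 - 4 * p) * t \<le> \<bar>n - 2 - 4 * p\<bar> * t" using assms by (intro mult_right_mono) auto
  moreover have "t\<^sup>2 \<le> t" using assms by (simp add: power2_eq_square mult_left_le_one_le)
  hence "p * t\<^sup>2 \<le> p * t" using p_pos by (intro mult_left_mono) auto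
  ultimately show ?thesis unfolding Q_eq by (simp add: algebra_simps)
qed

lemma exists_y_pos: "\<exists>s. y s > 0"
proof -
  have "eventually (\<lambda>s. w s < w 0 \<and> s < 0) at_bot"
    using order_tendstoD(2)[OF w_tendsto_at_bot w_pos[of 0]] eventually_gt_at_bot
    by (rule eventually_conj)
  then obtain s' where "w s' < w 0" "s' < 0"
    using eventually_happens'[OF trivial_limit_at_bot_linorder] by blast
  then obtain x where "w 0 - w s' = (0 - s') * (w x * y x)"
    using MVT2[of s' 0 w "\<lambda>s. w s * y s"] w_deriv by auto
  hence "w x * y x > 0"
    using \<open>s' < 0\<close> \<open>w s' < w 0\<close> by (smt (verit) mult_nonneg_nonpos)
  thus ?thesis using w_pos[of x] by (auto simp: zero_less_mult_iff)
qed

lemma y_pos_eventually: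
  obtains s0 where "\<And>s. s \<ge> s0 \<Longrightarrow> y s > 0"
proof -
  obtain s0 where "y s0 > 0" using exists_y_pos by blast
  have "y s > 0" if "s \<ge> s0" for s
    by (rule pos_if_deriv_pos_at_zeros[OF y_deriv_Q \<open>y s0 > 0\<close> _ that])
       (use c0_pos in \<open>simp add: Q_eq\<close>)
  thus thesis using that by blast
qed

lemma y_ge_const_if_w_bounded:
  assumes w_lt: "\<And>s. s \<ge> s0 \<Longrightarrow> w s < M" and y_pos: "\<And>s. s \<ge> s0 \<Longrightarrow> y s > 0"
  obtains \<delta> where "\<delta> > 0" "eventually (\<lambda>s. y s \<ge> \<delta>) at_top"
proof -
  define K where "K = \<bar>n - 2 - 4 * p\<bar> + p + b * M"
  have "M > 0" using w_lt[of s0] w_pos[of s0] by simp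
  hence "K > 0" unfolding K_def using p_pos b_pos by (simp add: add_nonneg_pos)
  define \<delta> where "\<delta> = min 1 (c0 / (2 * K))"
  have "\<delta> > 0" using c0_pos \<open>K > 0\<close> unfolding \<delta>_def by simp
  \<comment> \<open>near y = 0 the source term c0 of y' dominates, as long as w stays bounded\<close>
  have "eventually (\<lambda>s. - y s \<le> - \<delta>) at_top"
  proof (rule eventually_le_if_deriv_le_neg_above)
    show "eventually (\<lambda>s. ((\<lambda>s. - y s) has_real_derivative - (Q (y s) - b * w s * y s)) (at s)) at_top"
      by (intro always_eventually allI DERIV_minus y_deriv_Q)
    show "eventually (\<lambda>s. - y s > - \<delta> \<longrightarrow> - (Q (y s) - b * w s * y s) \<le> - (c0 / 2)) at_top"
      unfolding eventually_at_top_linorder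
    proof (intro exI[of _ s0] allI impI)
      fix s assume "s \<ge> s0" "- y s > - \<delta>"
      hence y: "0 < y s" "y s \<le> 1" "y s \<le> c0 / (2 * K)" using y_pos unfolding \<delta>_def by auto
      have "b * w s * y s \<le> b * M * y s"
        using w_lt[OF \<open>s \<ge> s0\<close>] y b_pos by (intro mult_right_mono mult_left_mono) auto
      moreover have "K * y s \<le> c0 / 2"
        using y \<open>K > 0\<close> by (simp add: field_simps)
      ultimately show "- (Q (y s) - b * w s * y s) \<le> - (c0 / 2)"
        using Q_ge_on_unit_interval[of "y s"] y unfolding K_def by (simp add: algebra_simps)
    qed
  qed (use c0_pos in simp)
  thus thesis using that \<open>\<delta> > 0\<close> by (auto elim: eventually_mono)
qed

lemma w_mono_if_y_nonneg:
  assumes "\<And>x. a \<le> x \<Longrightarrow> x \<le> c \<Longrightarrow> y x \<ge> 0" and "a \<le> c"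
  shows "w a \<le> w c"
  using assms w_pos w_deriv
  by (intro DERIV_nonneg_imp_nondecreasing[of a c w])
     (auto intro!: exI[of _ "w _ * y _"] mult_nonneg_nonneg simp: less_imp_le[OF w_pos])

lemma w_tendsto_at_top_if_y_ge:
  assumes "\<delta> > 0" and y_ge: "\<And>s. s \<ge> s1 \<Longrightarrow> y s \<ge> \<delta>"
  shows "filterlim w at_top at_top"
proof (rule filterlim_at_top_mono)
  show "filterlim (\<lambda>s. (w s1 - w s1 * \<delta> * s1) + w s1 * \<delta> * s) at_top at_top"
    using \<open>\<delta> > 0\<close> w_pos[of s1]
    by (intro filterlim_tendsto_add_at_top[OF tendsto_const]
        filterlim_tendsto_pos_mult_at_top[OF tendsto_const _ filterlim_ident]) auto
  have "(w s1 - w s1 * \<delta> * s1) + w s1 * \<delta> * s \<le> w s" if "s \<ge> s1" for s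
  proof -
    have w_ge: "w x \<ge> w s1" if "s1 \<le> x" for x
      using y_ge \<open>\<delta> > 0\<close> that by (intro w_mono_if_y_nonneg) (auto intro: order_trans[OF less_imp_le])
    have "w s1 - w s1 * \<delta> * s1 \<le> w s - w s1 * \<delta> * s"
    proof (rule DERIV_nonneg_imp_nondecreasing[OF \<open>s \<ge> s1\<close>])
      fix x assume "s1 \<le> x" "x \<le> s"
      have "w s1 * \<delta> \<le> w x * y x"
        using w_ge[OF \<open>s1 \<le> x\<close>] y_ge[OF \<open>s1 \<le> x\<close>] w_pos[of s1] \<open>\<delta> > 0\<close>
        by (intro mult_mono) auto
      thus "\<exists>d. ((\<lambda>s. w s - w s1 * \<delta> * s) has_real_derivative d) (at x) \<and> 0 \<le> d"
        by (intro exI[of _ "w x * y x - w s1 * \<delta>"]) (auto intro!: derivative_eq_intros w_deriv)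
    qed
    thus ?thesis by (simp add: algebra_simps)
  qed
  thus "eventually (\<lambda>s. (w s1 - w s1 * \<delta> * s1) + w s1 * \<delta> * s \<le> w s) at_top"
    unfolding eventually_at_top_linorder by blast
qed

lemma w_tendsto_at_top: "filterlim w at_top at_top"
  unfolding filterlim_at_top
proof
  fix M
  obtain s0 where y_pos: "\<And>s. s \<ge> s0 \<Longrightarrow> y s > 0" using y_pos_eventually by blast
  show "eventually (\<lambda>s. M \<le> w s) at_top"
  proof (rule ccontr)
    assume not_ev: "\<not> eventually (\<lambda>s. M \<le> w s) at_top"
    have w_lt: "w s < M" if "s \<ge> s0" for s
    proof (rule ccontr)
      assume "\<not> w s < M"
      hence "M \<le> w c" if "s \<le> c" for c
        using w_mono_if_y_nonneg[OF _ that] y_pos \<open>s \<ge> s0\<close> by (smt (verit))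
      thus False using not_ev unfolding eventually_at_top_linorder by blast
    qed
    obtain \<delta> where "\<delta> > 0" and "eventually (\<lambda>s. y s \<ge> \<delta>) at_top"
      using y_ge_const_if_w_bounded[OF w_lt y_pos] .
    then obtain s1 where "\<And>s. s \<ge> s1 \<Longrightarrow> y s \<ge> \<delta>"
      unfolding eventually_at_top_linorder by blast
    from w_tendsto_at_top_if_y_ge[OF \<open>\<delta> > 0\<close> this] show False
      using not_ev unfolding filterlim_at_top by blast
  qed
qed

lemma y_tendsto_0: "(y \<longlongrightarrow> 0) at_top"
proof (rule order_tendstoI)
  fix a :: real assume "a < 0"
  obtain s0 where "\<And>s. s \<ge> s0 \<Longrightarrow> y s > 0" using y_pos_eventually by blast
  thus "eventually (\<lambda>s. a < y s) at_top"
    unfolding eventually_at_top_linorder using \<open>a < 0\<close> by (meson less_trans)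
next
  fix a :: real assume "a > 0"
  define Qmax where "Qmax = (n - 2)\<^sup>2 / (4 * p)"
  have "eventually (\<lambda>s. y s \<le> 0 / b + a / 2) at_top"
  proof (rule eventually_le_of_relaxation[OF _ _ w_tendsto_at_top])
    show "eventually (\<lambda>s. Q (y s) - b * w s * y s \<le> w s * (Qmax / w s - b * y s)) at_top"
      using Q_le w_pos by (simp add: Qmax_def right_diff_distrib less_imp_neq[symmetric])
    show "((\<lambda>s. Qmax / w s) \<longlongrightarrow> 0) at_top"
      by (intro tendsto_divide_0[OF tendsto_const] filterlim_at_top_imp_at_infinity w_tendsto_at_top)
  qed (use y_deriv_Q b_pos \<open>a > 0\<close> in auto)
  thus "eventually (\<lambda>s. y s < a) at_top"
    by eventually_elim (use \<open>a > 0\<close> in auto)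
qed

definition a0 :: real where "a0 = c0 / b"

definition b0 :: real where "b0 = - (n - 2 - 4 * p) / b"

definition z :: "real \<Rightarrow> real" where "z s = w s * y s"

definition e :: "real \<Rightarrow> real" where "e s = (y s)\<^sup>2 + Q (y s) - b * z s"

lemma w_deriv_z: "(w has_real_derivative z s) (at s)"
  using w_deriv unfolding z_def .

lemma y_deriv_e: "(y has_real_derivative e s - (y s)\<^sup>2) (at s)"
  using y_deriv_Q unfolding e_def z_def by (simp add: algebra_simps)

lemma z_deriv: "(z has_real_derivative w s * e s) (at s)"
proof -
  have "(z has_real_derivative z s * y s + (e s - (y s)\<^sup>2) * w s) (at s)"
    unfolding z_def[abs_def] by (intro DERIV_mult w_deriv y_deriv_e[unfolded z_def])
  thus ?thesis unfolding z_def by (simp add: power2_eq_square algebra_simps)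
qed

lemma z_tendsto: "(z \<longlongrightarrow> a0) at_top"
  unfolding a0_def
proof (rule tendsto_of_relaxation[OF _ w_tendsto_at_top _ b_pos])
  show "eventually (\<lambda>s. (z has_real_derivative w s * ((y s)\<^sup>2 + Q (y s) - b * z s)) (at s)) at_top"
    using z_deriv unfolding e_def by simp
  have "((\<lambda>s. (y s)\<^sup>2 + (c0 - (n - 2 - 4 * p) * y s - p * (y s)\<^sup>2)) \<longlongrightarrow>
      0\<^sup>2 + (c0 - (n - 2 - 4 * p) * 0 - p * 0\<^sup>2)) at_top"
    by (intro tendsto_intros y_tendsto_0)
  thus "((\<lambda>s. (y s)\<^sup>2 + Q (y s)) \<longlongrightarrow> c0) at_top" unfolding Q_eq by simp
qed

lemma a0_pos: "a0 > 0"
  unfolding a0_def using c0_pos b_pos by simp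

lemma w_div_tendsto: "((\<lambda>s. w s / s) \<longlongrightarrow> a0) at_top"
proof (rule lhospital_at_top_at_top[where f' = z and g' = "\<lambda>_. 1"])
  show "((\<lambda>s. z s / 1) \<longlongrightarrow> a0) at_top" using z_tendsto by simp
qed (auto intro!: filterlim_ident derivative_eq_intros always_eventually w_deriv_z)

lemma times_y_tendsto_1: "((\<lambda>s. s * y s) \<longlongrightarrow> 1) at_top"
proof -
  have "((\<lambda>s. z s / (w s / s)) \<longlongrightarrow> a0 / a0) at_top"
    using a0_pos by (intro tendsto_divide z_tendsto w_div_tendsto) simp
  moreover have "eventually (\<lambda>s. z s / (w s / s) = s * y s) at_top"
    using eventually_gt_at_top[of 0]
    by eventually_elim (use w_pos in \<open>simp add: z_def field_simps less_imp_neq[symmetric]\<close>)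
  ultimately show ?thesis using a0_pos by (simp add: tendsto_cong)
qed

definition G :: "real \<Rightarrow> real" where "G s = 2 * y s - 2 * p * (y s - 2) - (n - 2)"

definition psi :: "real \<Rightarrow> real" where "psi s = s\<^sup>2 * e s"

lemma Q_deriv: "(Q has_real_derivative - 2 * p * (t - 2) - (n - 2)) (at t)"
  unfolding Q_def[abs_def] by (auto intro!: derivative_eq_intros)

lemma e_deriv: "(e has_real_derivative G s * (e s - (y s)\<^sup>2) - b * (w s * e s)) (at s)"
proof -
  have "((\<lambda>s. (y s)\<^sup>2) has_real_derivative 2 * y s * (e s - (y s)\<^sup>2)) (at s)"
    by (rule DERIV_cong[OF DERIV_power[OF y_deriv_e, of 2]]) simp
  moreover have "((\<lambda>s. Q (y s)) has_real_derivative
      (- 2 * p * (y s - 2) - (n - 2)) * (e s - (y s)\<^sup>2)) (at s)"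
    by (rule DERIV_chain2[OF Q_deriv y_deriv_e])
  ultimately have "((\<lambda>s. (y s)\<^sup>2 + Q (y s) - b * z s) has_real_derivative 2 * y s * (e s - (y s)\<^sup>2)
      + (- 2 * p * (y s - 2) - (n - 2)) * (e s - (y s)\<^sup>2) - b * (w s * e s)) (at s)"
    by (intro DERIV_diff DERIV_add DERIV_cmult z_deriv)
  moreover have "(\<lambda>s. (y s)\<^sup>2 + Q (y s) - b * z s) = e" by (simp add: e_def[abs_def])
  ultimately show ?thesis unfolding G_def by (simp add: algebra_simps)
qed

lemma psi_deriv:
  assumes "s \<noteq> 0"
  shows "(psi has_real_derivative psi s * (2 / s + G s - b * w s) - G s * (s * y s)\<^sup>2) (at s)"
proof -
  have "(psi has_real_derivative 2 * s * e s + (G s * (e s - (y s)\<^sup>2) - b * (w s * e s)) * s\<^sup>2) (at s)"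
    unfolding psi_def[abs_def] by (auto intro!: derivative_eq_intros e_deriv)
  moreover have "2 * s * e s + (G s * (e s - (y s)\<^sup>2) - b * (w s * e s)) * s\<^sup>2
      = psi s * (2 / s + G s - b * w s) - G s * (s * y s)\<^sup>2"
    using assms unfolding psi_def by (simp add: power2_eq_square field_simps)
  ultimately show ?thesis by simp
qed

lemma G_tendsto: "(G \<longlongrightarrow> 4 * p - n + 2) at_top"
proof -
  have "((\<lambda>s. 2 * y s - 2 * p * (y s - 2) - (n - 2)) \<longlongrightarrow> 2 * 0 - 2 * p * (0 - 2) - (n - 2)) at_top"
    by (intro tendsto_intros y_tendsto_0)
  thus ?thesis unfolding G_def[abs_def] by (simp add: algebra_simps)
qed

lemma psi_bounded: "\<exists>C. eventually (\<lambda>s. \<bar>psi s\<bar> \<le> C) at_top"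
proof -
  have "eventually (\<lambda>s. (psi has_real_derivative
      psi s * ((2 / s + G s) + - (b * w s)) - G s * (s * y s)\<^sup>2) (at s)) at_top"
    using eventually_gt_at_top[of 0] by eventually_elim (use psi_deriv in auto)
  moreover have "filterlim (\<lambda>s. (2 / s + G s) + - (b * w s)) at_bot at_top"
  proof (subst filterlim_tendsto_add_at_bot_iff)
    show "((\<lambda>s. 2 / s + G s) \<longlongrightarrow> 0 + (4 * p - n + 2)) at_top"
      by (intro tendsto_intros G_tendsto tendsto_divide_0[OF tendsto_const] at_top_le_at_infinity
          filterlim_at_top_imp_at_infinity filterlim_ident)
    show "filterlim (\<lambda>s. - (b * w s)) at_bot at_top"
      unfolding filterlim_uminus_at_top[symmetric]
      by (rule filterlim_tendsto_pos_mult_at_top[OF tendsto_const b_pos w_tendsto_at_top])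
  qed
  moreover have "((\<lambda>s. G s * (s * y s)\<^sup>2) \<longlongrightarrow> (4 * p - n + 2) * 1\<^sup>2) at_top"
    by (intro tendsto_intros G_tendsto times_y_tendsto_1)
  ultimately have "eventually (\<lambda>s. \<bar>psi s\<bar> \<le> \<bar>(4 * p - n + 2) * 1\<^sup>2\<bar> + 2) at_top"
    by (rule bounded_if_deriv_damped)
  thus ?thesis by blast
qed

lemma times_z_minus_a0_eq:
  assumes "s \<noteq> 0"
  shows "s * (z s - a0) = b0 * (s * y s) + (1 - p) / b * (s * y s) * y s - psi s / s / b"
  using assms b_pos unfolding e_def Q_eq a0_def b0_def psi_def
  by (simp add: power2_eq_square field_simps)

lemma times_z_minus_a0_tendsto: "((\<lambda>s. s * (z s - a0)) \<longlongrightarrow> b0) at_top"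
proof -
  obtain C where "eventually (\<lambda>s. \<bar>psi s\<bar> \<le> C) at_top" using psi_bounded by blast
  hence "((\<lambda>s. b0 * (s * y s) + (1 - p) / b * (s * y s) * y s - psi s / s / b)
      \<longlongrightarrow> b0 * 1 + (1 - p) / b * 1 * 0 - 0 / b) at_top"
    by (intro tendsto_intros times_y_tendsto_1 y_tendsto_0 bounded_divide_tendsto_0 filterlim_ident)
      (use b_pos in auto)
  moreover have "eventually (\<lambda>s. b0 * (s * y s) + (1 - p) / b * (s * y s) * y s - psi s / s / b
      = s * (z s - a0)) at_top"
    using eventually_gt_at_top[of 0] by eventually_elim (simp add: times_z_minus_a0_eq)
  ultimately show ?thesis by (simp add: tendsto_cong)
qed

lemma w_minus_linear_div_ln_tendsto: "((\<lambda>s. (w s - a0 * s) / ln s) \<longlongrightarrow> b0) at_top"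
proof (rule lhospital_at_top_at_top[where f' = "\<lambda>s. z s - a0" and g' = "\<lambda>s. 1 / s"])
  show "eventually (\<lambda>s. DERIV (\<lambda>s. w s - a0 * s) s :> z s - a0) at_top"
    by (auto intro!: always_eventually derivative_eq_intros w_deriv_z)
  show "eventually (\<lambda>s :: real. DERIV ln s :> 1 / s) at_top"
    by (rule eventually_mono[OF eventually_gt_at_top[of "0 :: real"]]) (rule DERIV_ln_divide)
  have "eventually (\<lambda>s. s * (z s - a0) = (z s - a0) / (1 / s)) at_top"
    using eventually_gt_at_top[of 0] by eventually_elim simp
  thus "((\<lambda>s. (z s - a0) / (1 / s)) \<longlongrightarrow> b0) at_top"
    using times_z_minus_a0_tendsto by (rule Lim_transform_eventually[rotated])
  show "eventually (\<lambda>s. 1 / s \<noteq> (0 :: real)) at_top"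
    using eventually_gt_at_top[of 0] by eventually_elim simp
qed (rule ln_at_top)

text \<open>After division by ln s the first term tends to -b0^2/a0: s (z - a0) stays bounded,
  while w - a0 s grows like b0 ln s.\<close>

lemma second_order_eq:
  assumes "s \<noteq> 0"
  shows "s\<^sup>2 * (w s * y s - a0 - b0 / s)
    = b0 * (s / w s) * (s * (z s - a0) - (w s - a0 * s)) + (1 - p) / b * (s * y s)\<^sup>2 - psi s / b"
proof -
  have "s\<^sup>2 * (w s * y s - a0 - b0 / s) = s * (s * (z s - a0)) - b0 * s"
    using assms unfolding z_def by (simp add: power2_eq_square field_simps)
  also have "\<dots> = s * (b0 * (s * y s) + (1 - p) / b * (s * y s) * y s - psi s / s / b) - b0 * s"
    using times_z_minus_a0_eq[OF assms] by simp
  also have "\<dots> = b0 * (s * (s * y s) - s) + (1 - p) / b * (s * y s)\<^sup>2 - psi s / b"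
    using assms by (simp add: power2_eq_square field_simps)
  also have "s * (s * y s) - s = (s / w s) * (s * (z s - a0) - (w s - a0 * s))"
    using w_pos[of s] unfolding z_def by (simp add: field_simps)
  finally show ?thesis by simp
qed

theorem second_order_asymptotics:
  "((\<lambda>s. s\<^sup>2 * (w s * y s - a0 - b0 / s) / ln s) \<longlongrightarrow> - (b0\<^sup>2 / a0)) at_top"
proof -
  have ln_inf: "filterlim (ln :: real \<Rightarrow> real) at_infinity at_top"
    by (rule filterlim_at_top_imp_at_infinity[OF ln_at_top])
  have "((\<lambda>s. 1 / (w s / s)) \<longlongrightarrow> 1 / a0) at_top"
    using a0_pos by (intro tendsto_intros w_div_tendsto) simp
  hence s_div_w: "((\<lambda>s. s / w s) \<longlongrightarrow> 1 / a0) at_top" by simp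
  have main: "((\<lambda>s. b0 * (s / w s) * (s * (z s - a0) / ln s - (w s - a0 * s) / ln s))
      \<longlongrightarrow> b0 * (1 / a0) * (0 - b0)) at_top"
    by (intro tendsto_mult tendsto_diff tendsto_const s_div_w
        tendsto_divide_0[OF times_z_minus_a0_tendsto ln_inf] w_minus_linear_div_ln_tendsto)
  have rest: "((\<lambda>s. (1 - p) / b * (s * y s)\<^sup>2 / ln s) \<longlongrightarrow> 0) at_top"
    by (rule tendsto_divide_0[OF tendsto_mult[OF tendsto_const tendsto_power[OF times_y_tendsto_1]] ln_inf])
  obtain C where "eventually (\<lambda>s. \<bar>psi s\<bar> \<le> C) at_top" using psi_bounded by blast
  hence "eventually (\<lambda>s. \<bar>psi s / b\<bar> \<le> C / b) at_top"
    by eventually_elim (use b_pos in \<open>simp add: abs_divide divide_right_mono\<close>)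
  hence psi_part: "((\<lambda>s. psi s / b / ln s) \<longlongrightarrow> 0) at_top"
    by (rule bounded_divide_tendsto_0[OF _ ln_at_top])
  have "((\<lambda>s. b0 * (s / w s) * (s * (z s - a0) / ln s - (w s - a0 * s) / ln s)
      + (1 - p) / b * (s * y s)\<^sup>2 / ln s - psi s / b / ln s)
      \<longlongrightarrow> b0 * (1 / a0) * (0 - b0) + 0 - 0) at_top"
    by (rule tendsto_diff[OF tendsto_add[OF main rest] psi_part])
  moreover have "eventually (\<lambda>s. b0 * (s / w s) * (s * (z s - a0) / ln s - (w s - a0 * s) / ln s)
      + (1 - p) / b * (s * y s)\<^sup>2 / ln s - psi s / b / ln s
      = s\<^sup>2 * (w s * y s - a0 - b0 / s) / ln s) at_top"
    using eventually_gt_at_top[of 0]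
  proof eventually_elim
    case (elim s)
    hence "s \<noteq> 0" by simp
    hence "s\<^sup>2 * (w s * y s - a0 - b0 / s) / ln s = (b0 * (s / w s) * (s * (z s - a0) - (w s - a0 * s))
        + (1 - p) / b * (s * y s)\<^sup>2 - psi s / b) / ln s"
      using second_order_eq[OF \<open>s \<noteq> 0\<close>] by (simp only:)
    thus ?case by (simp add: diff_divide_distrib add_divide_distrib right_diff_distrib)
  qed
  ultimately have "((\<lambda>s. s\<^sup>2 * (w s * y s - a0 - b0 / s) / ln s)
      \<longlongrightarrow> b0 * (1 / a0) * (0 - b0) + 0 - 0) at_top"
    by (rule Lim_transform_eventually)
  thus ?thesis by (simp add: power2_eq_square)
qed

end

lemma has_real_derivative_pdiff_on_axis:
  fixes G :: "real^'n::finite \<Rightarrow> real" and \<phi> :: "real \<Rightarrow> real"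
  assumes "r > 0" and on_axis: "\<And>u. u > 0 \<Longrightarrow> G (u *\<^sub>R axis i 1) = \<phi> u"
    and diff: "(\<lambda>t. G (r *\<^sub>R axis i 1 + t *\<^sub>R axis i 1)) differentiable (at 0)"
  shows "(\<phi> has_real_derivative pdiff i G (r *\<^sub>R axis i 1)) (at r)"
proof -
  define g where "g t = G (r *\<^sub>R axis i 1 + t *\<^sub>R axis i 1)" for t
  have "(g has_real_derivative deriv g 0) (at (r + - r))"
    using diff unfolding g_def[abs_def] by (simp add: DERIV_deriv_iff_real_differentiable)
  hence shifted: "((\<lambda>u. g (u + - r)) has_real_derivative deriv g 0) (at r)"
    by (simp only: DERIV_shift)
  have "(\<phi> has_real_derivative deriv g 0) (at r)"
  proof (rule has_field_derivative_transform_within_open[OF shifted, of "{0<..}"])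
    fix u :: real assume "u \<in> {0<..}"
    have "r *\<^sub>R axis i 1 + (u + - r) *\<^sub>R axis i 1 = u *\<^sub>R (axis i 1 :: real^'n)"
      by (simp add: scaleR_add_left[symmetric])
    thus "g (u + - r) = \<phi> u" unfolding g_def using on_axis \<open>u \<in> {0<..}\<close> by simp
  qed (use \<open>r > 0\<close> in auto)
  moreover have "pdiff i G (r *\<^sub>R axis i 1) = deriv g 0" unfolding pdiff_def g_def[abs_def] ..
  ultimately show ?thesis by simp
qed

lemma norm_two_axes:
  fixes i j :: "'n::finite"
  assumes "j \<noteq> i"
  shows "norm (a *\<^sub>R axis i (1::real) + b *\<^sub>R axis j 1 :: real^'n) = sqrt (a\<^sup>2 + b\<^sup>2)"
  using assms unfolding norm_eq_sqrt_inner
  by (simp add: inner_add_left inner_add_right inner_axis_axis power2_eq_square)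

lemma pdiff_radial_transversal:
  fixes F :: "real^'n::finite \<Rightarrow> real"
  assumes "j \<noteq> i" "r > 0"
    and F_radial: "\<And>x. F x = f (norm x)"
    and f_deriv: "\<And>\<rho>. \<rho> > 0 \<Longrightarrow> (f has_real_derivative f1 \<rho>) (at \<rho>)"
  shows "pdiff j F (r *\<^sub>R axis i 1 + t *\<^sub>R axis j 1)
    = f1 (sqrt (r\<^sup>2 + t\<^sup>2)) * (t / sqrt (r\<^sup>2 + t\<^sup>2))"
proof -
  have pos: "r\<^sup>2 + t\<^sup>2 > 0" using \<open>r > 0\<close> by (simp add: add_pos_nonneg)
  have "r *\<^sub>R axis i 1 + t *\<^sub>R axis j 1 + u *\<^sub>R axis j 1
      = r *\<^sub>R axis i 1 + (t + u) *\<^sub>R (axis j 1 :: real^'n)" for u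
    by (simp add: scaleR_add_left algebra_simps)
  hence line: "(\<lambda>u. F (r *\<^sub>R axis i 1 + t *\<^sub>R axis j 1 + u *\<^sub>R axis j 1))
      = (\<lambda>u. f (sqrt (r\<^sup>2 + (t + u)\<^sup>2)))"
    using norm_two_axes[OF \<open>j \<noteq> i\<close>] F_radial by presburger
  have sqrt_deriv:
    "((\<lambda>u. sqrt (r\<^sup>2 + (t + u)\<^sup>2)) has_real_derivative t / sqrt (r\<^sup>2 + t\<^sup>2)) (at 0)"
    using pos by (auto intro!: derivative_eq_intros simp: field_simps)
  have "((\<lambda>u. f (sqrt (r\<^sup>2 + (t + u)\<^sup>2))) has_real_derivative
      f1 (sqrt (r\<^sup>2 + t\<^sup>2)) * (t / sqrt (r\<^sup>2 + t\<^sup>2))) (at 0)"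
    using DERIV_chain2[OF f_deriv sqrt_deriv] pos by simp
  thus ?thesis unfolding pdiff_def line by (rule DERIV_imp_deriv)
qed

lemma pdiff2_radial_transversal:
  fixes F :: "real^'n::finite \<Rightarrow> real"
  assumes "j \<noteq> i" "r > 0"
    and F_radial: "\<And>x. F x = f (norm x)"
    and f_deriv: "\<And>\<rho>. \<rho> > 0 \<Longrightarrow> (f has_real_derivative f1 \<rho>) (at \<rho>)"
    and f1_deriv: "(f1 has_real_derivative f2) (at r)"
  shows "pdiff j (pdiff j F) (r *\<^sub>R axis i 1) = f1 r / r"
proof -
  have line: "(\<lambda>t. pdiff j F (r *\<^sub>R axis i 1 + t *\<^sub>R axis j 1))
      = (\<lambda>t. f1 (sqrt (r\<^sup>2 + t\<^sup>2)) * (t / sqrt (r\<^sup>2 + t\<^sup>2)))"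
    using pdiff_radial_transversal[OF assms(1-4)] by auto
  have sqrt_r: "sqrt (r\<^sup>2 + 0\<^sup>2) = r" using \<open>r > 0\<close> by simp
  have "((\<lambda>t. sqrt (r\<^sup>2 + t\<^sup>2)) has_real_derivative 0) (at 0)"
    using \<open>r > 0\<close> by (auto intro!: derivative_eq_intros)
  hence "((\<lambda>t. f1 (sqrt (r\<^sup>2 + t\<^sup>2))) has_real_derivative f2 * 0) (at 0)"
    using DERIV_chain2[of f1 f2 "\<lambda>t. sqrt (r\<^sup>2 + t\<^sup>2)" 0 0] f1_deriv sqrt_r by simp
  moreover have "((\<lambda>t. t / sqrt (r\<^sup>2 + t\<^sup>2)) has_real_derivative 1 / r) (at 0)"
    using \<open>r > 0\<close> by (auto intro!: derivative_eq_intros simp: field_simps)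
  ultimately have "((\<lambda>t. f1 (sqrt (r\<^sup>2 + t\<^sup>2)) * (t / sqrt (r\<^sup>2 + t\<^sup>2))) has_real_derivative
      f2 * 0 * (0 / sqrt (r\<^sup>2 + 0\<^sup>2)) + 1 / r * f1 (sqrt (r\<^sup>2 + 0\<^sup>2))) (at 0)"
    by (rule DERIV_mult)
  hence "((\<lambda>t. f1 (sqrt (r\<^sup>2 + t\<^sup>2)) * (t / sqrt (r\<^sup>2 + t\<^sup>2)))
      has_real_derivative f1 r / r) (at 0)"
    using sqrt_r by simp
  thus ?thesis unfolding pdiff_def[of j "pdiff j F"] line by (rule DERIV_imp_deriv)
qed

lemma laplacian_radial_on_axis:
  fixes F :: "real^'n::finite \<Rightarrow> real"
  assumes r: "r > 0" and F_radial: "\<And>x. F x = f (norm x)"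
    and f_deriv: "\<And>\<rho>. \<rho> > 0 \<Longrightarrow> (f has_real_derivative f1 \<rho>) (at \<rho>)"
    and f1_deriv: "(f1 has_real_derivative f2) (at r)"
  shows "laplacian F (r *\<^sub>R axis i 1)
    = pdiff i (pdiff i F) (r *\<^sub>R axis i 1) + (real CARD('n) - 1) * f1 r / r"
proof -
  have "laplacian F (r *\<^sub>R axis i 1)
      = pdiff i (pdiff i F) (r *\<^sub>R axis i 1) + (\<Sum>j\<in>UNIV - {i}. pdiff j (pdiff j F) (r *\<^sub>R axis i 1))"
    unfolding laplacian_def by (rule sum.remove) auto
  also have "(\<Sum>j\<in>UNIV - {i}. pdiff j (pdiff j F) (r *\<^sub>R axis i 1)) = (\<Sum>j\<in>UNIV - {i}. f1 r / r)"
    using pdiff2_radial_transversal[OF _ r F_radial f_deriv f1_deriv] by (intro sum.cong) auto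
  also have "\<dots> = (real CARD('n) - 1) * (f1 r / r)"
    by (simp add: card_Diff_singleton of_nat_diff Suc_leI)
  finally show ?thesis by simp
qed

lemma radial_solution_ode:
  fixes V :: "real^'n::finite \<Rightarrow> real" and v :: "real \<Rightarrow> real"
  assumes sol: "radial_solution m \<beta> lam V" and Vv: "\<forall>x. V x = v (norm x)"
  obtains v1 f1 f2 :: "real \<Rightarrow> real" where
    "\<And>r. r > 0 \<Longrightarrow> (v has_real_derivative v1 r) (at r)"
    "\<And>r. r > 0 \<Longrightarrow> ((\<lambda>r. v r powr m) has_real_derivative f1 r) (at r)"
    "\<And>r. r > 0 \<Longrightarrow> (f1 has_real_derivative f2 r) (at r)"
    "\<And>r. r > 0 \<Longrightarrow> (real CARD('n) - 1) / m * (f2 r + (real CARD('n) - 1) * f1 r / r)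
       + 2 * \<beta> / (1 - m) * v r + \<beta> * (r * v1 r) = 0"
proof -
  fix i :: 'n
  define F where "F y = V y powr m" for y
  define v1 where "v1 r = pdiff i V (r *\<^sub>R axis i 1)" for r
  define f1 where "f1 r = pdiff i F (r *\<^sub>R axis i 1)" for r
  define f2 where "f2 r = pdiff i (pdiff i F) (r *\<^sub>R axis i 1)" for r
  have V_diff: "(\<lambda>t. V (x + t *\<^sub>R axis j 1)) differentiable (at 0)" for x j
    using sol unfolding radial_solution_def C1_Rn_def by blast
  have F_diff: "(\<lambda>t. F (x + t *\<^sub>R axis j 1)) differentiable (at 0)"
    and F1_diff: "(\<lambda>t. pdiff k F (x + t *\<^sub>R axis j 1)) differentiable (at 0)" for x j k
    using sol unfolding radial_solution_def C2_Rn_def C1_Rn_def F_def[abs_def] by blast+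
  have pde: "(real CARD('n) - 1) / m * laplacian F x + 2 * \<beta> / (1 - m) * V x
      + \<beta> * (\<Sum>j\<in>UNIV. x $ j * pdiff j V x) = 0" for x
    using sol unfolding radial_solution_def F_def[abs_def] by blast
  have v_deriv: "(v has_real_derivative v1 r) (at r)" if "r > 0" for r
    unfolding v1_def by (rule has_real_derivative_pdiff_on_axis[OF that _ V_diff]) (use Vv in simp)
  have f_deriv: "((\<lambda>r. v r powr m) has_real_derivative f1 r) (at r)" if "r > 0" for r
    unfolding f1_def by (rule has_real_derivative_pdiff_on_axis[OF that _ F_diff]) (use Vv in \<open>simp add: F_def\<close>)
  have f1_deriv: "(f1 has_real_derivative f2 r) (at r)" if "r > 0" for r
    unfolding f2_def by (rule has_real_derivative_pdiff_on_axis[OF that _ F1_diff]) (simp add: f1_def)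
  have "(real CARD('n) - 1) / m * (f2 r + (real CARD('n) - 1) * f1 r / r)
      + 2 * \<beta> / (1 - m) * v r + \<beta> * (r * v1 r) = 0" if "r > 0" for r
  proof -
    have "(\<Sum>j\<in>UNIV. (r *\<^sub>R axis i 1 :: real^'n) $ j * pdiff j V (r *\<^sub>R axis i 1)) = r * v1 r"
    proof -
      have "(\<Sum>j\<in>UNIV. (r *\<^sub>R axis i 1 :: real^'n) $ j * pdiff j V (r *\<^sub>R axis i 1))
          = (\<Sum>j\<in>UNIV. if j = i then r * pdiff j V (r *\<^sub>R axis i 1) else 0)"
        by (intro sum.cong) (auto simp: axis_def)
      thus ?thesis unfolding v1_def by simp
    qed
    moreover have "laplacian F (r *\<^sub>R axis i 1) = f2 r + (real CARD('n) - 1) * f1 r / r"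
      unfolding f2_def using Vv that
      by (intro laplacian_radial_on_axis[OF that _ f_deriv f1_deriv[OF that]]) (auto simp: F_def)
    ultimately show ?thesis using pde[of "r *\<^sub>R axis i 1"] Vv that by simp
  qed
  with v_deriv f_deriv f1_deriv that show thesis by blast
qed



lemma radial_ode_log_scale_identity:
  fixes q V0 E m k N \<beta> f1 f2 v1 :: real
  assumes "q > 0" "V0 > 0" "E > 0" "m > 0" "k > 0" "N > 0"
    and v1: "v1 = f1 * V0 / (m * q)"
    and ode: "N / m * (f2 + N * f1 / E) + 2 * \<beta> / k * V0 + \<beta> * (E * v1) = 0"
  shows "k / m * (((E * f1 + f2 * E * E) * q - (E * f1) * (f1 * E)) / (q * q))
    = - (m / k) * (k / m * (E * f1 / q))\<^sup>2 - (N - 1) * (k / m * (E * f1 / q))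
      - \<beta> / N * (E\<^sup>2 * (V0 / q)) * (2 + k / m * (E * f1 / q))"
proof -
  define K where "K = 2 * \<beta> / k * V0 + \<beta> * (E * v1)"
  have ode_K: "N / m * (f2 + N * f1 / E) = - K" using ode unfolding K_def by linarith
  have "f2 + N * f1 / E = m / N * (N / m * (f2 + N * f1 / E))" using assms by simp
  also have "\<dots> = - (m / N * K)" unfolding ode_K by simp
  finally have f2: "f2 = - (m / N * K) - N * f1 / E" by (simp add: eq_diff_eq)
  show ?thesis unfolding f2 K_def v1 using assms by (simp add: field_simps power2_eq_square)
qed

context
  fixes m \<beta> N :: real and v v1 f1 f2 w y :: "real \<Rightarrow> real"
  assumes m: "0 < m" "m < 1" and N: "N > 1"
    and v_pos: "\<And>r. r > 0 \<Longrightarrow> v r > 0"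
    and v_deriv: "\<And>r. r > 0 \<Longrightarrow> (v has_real_derivative v1 r) (at r)"
    and f_deriv: "\<And>r. r > 0 \<Longrightarrow> ((\<lambda>r. v r powr m) has_real_derivative f1 r) (at r)"
    and f1_deriv: "\<And>r. r > 0 \<Longrightarrow> (f1 has_real_derivative f2 r) (at r)"
    and ode: "\<And>r. r > 0 \<Longrightarrow>
      (N - 1) / m * (f2 r + (N - 1) * f1 r / r) + 2 * \<beta> / (1 - m) * v r + \<beta> * (r * v1 r) = 0"
    and w_eq: "\<And>s. w s = (exp s)\<^sup>2 * v (exp s) powr (1 - m)"
    and y_eq: "\<And>s. y s = 2 + (1 - m) / m * (exp s * f1 (exp s) / v (exp s) powr m)"
begin

lemma v1_eq: "r > 0 \<Longrightarrow> v1 r = f1 r * v r / (m * v r powr m)"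
  using DERIV_unique[OF f_deriv DERIV_fun_powr[OF v_deriv v_pos]] v_pos[of r] m
  by (simp add: powr_diff field_simps)

lemma log_scale_w_deriv: "(w has_real_derivative w s * y s) (at s)"
proof -
  define E where "E = exp s"
  define V0 where "V0 = v E"
  define q where "q = V0 powr m"
  have "E > 0" "V0 > 0" "q > 0" using v_pos[of "exp s"] unfolding E_def V0_def q_def by auto
  have "((\<lambda>s. v (exp s) powr (1 - m)) has_real_derivative
      (1 - m) * V0 powr (1 - m - 1) * (v1 E * E)) (at s)"
    using DERIV_fun_powr[where r = "1 - m", OF DERIV_chain2[OF v_deriv DERIV_exp]] \<open>V0 > 0\<close>
    unfolding V0_def E_def by simp
  moreover have "((\<lambda>s. (exp s)\<^sup>2) has_real_derivative 2 * E\<^sup>2) (at s)"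
    unfolding E_def by (auto intro!: derivative_eq_intros simp: power2_eq_square)
  ultimately have w_deriv: "(w has_real_derivative 2 * E\<^sup>2 * V0 powr (1 - m)
      + (1 - m) * V0 powr (1 - m - 1) * (v1 E * E) * E\<^sup>2) (at s)"
    unfolding w_eq[abs_def] using DERIV_mult by (fastforce simp: E_def V0_def)
  have powrs: "V0 powr (1 - m) = V0 / q" "V0 powr (1 - m - 1) = 1 / q"
    using \<open>V0 > 0\<close> unfolding q_def by (simp_all add: powr_diff powr_minus divide_inverse)
  have ws: "w s = E\<^sup>2 * (V0 / q)"
    using powrs unfolding w_eq E_def V0_def by simp
  have ys: "y s = 2 + (1 - m) / m * (E * f1 E / q)"
    unfolding y_eq E_def V0_def q_def ..
  have v1E: "v1 E = f1 E * V0 / (m * q)"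
    unfolding v1_eq[OF \<open>E > 0\<close>] V0_def q_def ..
  have "2 * E\<^sup>2 * V0 powr (1 - m) + (1 - m) * V0 powr (1 - m - 1) * (v1 E * E) * E\<^sup>2
      = w s * y s"
    unfolding powrs ws ys v1E using \<open>q > 0\<close> m by (simp add: power2_eq_square field_simps)
  with w_deriv show ?thesis by simp
qed


lemma log_scale_y_deriv:
  "(y has_real_derivative
     - (m / (1 - m)) * (y s - 2)\<^sup>2 - (N - 2) * (y s - 2) - \<beta> / (N - 1) * w s * y s) (at s)"
proof -
  define E where "E = exp s"
  define V0 where "V0 = v E"
  define q where "q = V0 powr m"
  have "E > 0" "V0 > 0" "q > 0" using v_pos[of "exp s"] unfolding E_def V0_def q_def by auto
  have "((\<lambda>s. exp s * f1 (exp s)) has_real_derivative E * f1 E + f2 E * E * E) (at s)"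
    using DERIV_mult[OF DERIV_exp DERIV_chain2[OF f1_deriv DERIV_exp]] unfolding E_def by simp
  moreover have "((\<lambda>s. v (exp s) powr m) has_real_derivative f1 E * E) (at s)"
    using DERIV_chain2[OF f_deriv DERIV_exp] unfolding E_def by simp
  ultimately have "((\<lambda>s. exp s * f1 (exp s) / v (exp s) powr m) has_real_derivative
      ((E * f1 E + f2 E * E * E) * q - (E * f1 E) * (f1 E * E)) / (q * q)) (at s)"
    using DERIV_divide \<open>q > 0\<close> unfolding q_def V0_def E_def by fastforce
  hence y_deriv: "(y has_real_derivative
      0 + (1 - m) / m * (((E * f1 E + f2 E * E * E) * q - (E * f1 E) * (f1 E * E)) / (q * q))) (at s)"
    unfolding y_eq[abs_def] by (intro DERIV_add DERIV_const DERIV_cmult)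
  have v1E: "v1 E = f1 E * V0 / (m * q)"
    unfolding v1_eq[OF \<open>E > 0\<close>] V0_def q_def ..
  have "(1 - m) / m * (((E * f1 E + f2 E * E * E) * q - (E * f1 E) * (f1 E * E)) / (q * q))
      = - (m / (1 - m)) * ((1 - m) / m * (E * f1 E / q))\<^sup>2 - (N - 1 - 1) * ((1 - m) / m * (E * f1 E / q))
        - \<beta> / (N - 1) * (E\<^sup>2 * (V0 / q)) * (2 + (1 - m) / m * (E * f1 E / q))"
    by (rule radial_ode_log_scale_identity[OF \<open>q > 0\<close> \<open>V0 > 0\<close> \<open>E > 0\<close> \<open>m > 0\<close> _ _ v1E])
       (use m N ode[OF \<open>E > 0\<close>] in \<open>auto simp: V0_def\<close>)
  moreover have "w s = E\<^sup>2 * (V0 / q)"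
    using \<open>V0 > 0\<close> unfolding w_eq E_def V0_def q_def by (simp add: powr_diff)
  moreover have "y s = 2 + (1 - m) / m * (E * f1 E / q)"
    unfolding y_eq E_def V0_def q_def ..
  ultimately show ?thesis using y_deriv by simp
qed

end


lemma radial_log_profile_tendsto_at_bot:
  fixes V :: "real^'n::finite \<Rightarrow> real"
  assumes sol: "radial_solution m \<beta> lam V" and Vv: "\<forall>x. V x = v (norm x)" and "lam > 0"
  shows "((\<lambda>s. (exp s)\<^sup>2 * v (exp s) powr (1 - m)) \<longlongrightarrow> 0) at_bot"
proof -
  fix i :: 'n
  have "(\<lambda>t. V (0 + t *\<^sub>R axis i 1)) differentiable (at 0)"
    using sol unfolding radial_solution_def C1_Rn_def by blast
  hence "isCont (\<lambda>t. V (0 + t *\<^sub>R axis i 1)) 0" by (rule differentiable_imp_continuous_within)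
  hence "((\<lambda>t. V (t *\<^sub>R axis i 1)) \<longlongrightarrow> V 0) (at 0)" by (simp add: isCont_def)
  hence "((\<lambda>t. V (t *\<^sub>R axis i 1)) \<longlongrightarrow> lam) (at_right 0)"
    using sol unfolding radial_solution_def by (simp add: filterlim_at_split)
  moreover have "eventually (\<lambda>t. V (t *\<^sub>R axis i 1) = v t) (at_right 0)"
    using eventually_at_right_less[of 0] Vv by (auto elim: eventually_mono)
  ultimately have "(v \<longlongrightarrow> lam) (at_right 0)" by (rule Lim_transform_eventually)
  moreover have "filterlim (exp :: real \<Rightarrow> real) (at_right 0) at_bot"
    unfolding filterlim_at using exp_at_bot by (auto intro: always_eventually)
  ultimately have "((\<lambda>s. v (exp s)) \<longlongrightarrow> lam) at_bot" by (rule filterlim_compose)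
  hence "((\<lambda>s. (exp s)\<^sup>2 * v (exp s) powr (1 - m)) \<longlongrightarrow> 0\<^sup>2 * lam powr (1 - m)) at_bot"
    using \<open>lam > 0\<close> by (intro tendsto_intros exp_at_bot) auto
  thus ?thesis by simp
qed

lemma radial_solution_wy_system:
  fixes V :: "real^'n::finite \<Rightarrow> real" and v w :: "real \<Rightarrow> real"
  assumes n_def: "n = real CARD('n)"
    and m_pos: "0 < m" and m_lt: "m < (n - 2) / n" and lam_pos: "lam > 0" and \<beta>_pos: "\<beta> > 0"
    and sol: "radial_solution m \<beta> lam V" and Vv: "\<forall>x. V x = v (norm x)"
    and w_def: "\<forall>s. w s = (exp s)\<^sup>2 * v (exp s) powr (1 - m)"
  obtains y where "wy_system (m / (1 - m)) (\<beta> / (n - 1)) n w y"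
proof -
  have "n > 0" unfolding n_def by simp
  hence nm: "n * m < n - 2" using m_lt by (simp add: pos_less_divide_eq mult.commute)
  have "n * m < n * 1" using nm by simp
  hence "m < 1" using \<open>n > 0\<close> by simp
  have "n > 1" using nm m_pos \<open>n > 0\<close> by (smt (verit) mult_pos_pos)
  have v_pos: "v r > 0" if "r > 0" for r
  proof -
    fix i :: 'n
    have "v r = V (r *\<^sub>R axis i 1)" using Vv that by simp
    thus ?thesis using sol unfolding radial_solution_def by simp
  qed
  obtain v1 f1 f2 where
    v_deriv: "\<And>r. r > 0 \<Longrightarrow> (v has_real_derivative v1 r) (at r)" and
    f_deriv: "\<And>r. r > 0 \<Longrightarrow> ((\<lambda>r. v r powr m) has_real_derivative f1 r) (at r)" and
    f1_deriv: "\<And>r. r > 0 \<Longrightarrow> (f1 has_real_derivative f2 r) (at r)" and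
    ode: "\<And>r. r > 0 \<Longrightarrow> (n - 1) / m * (f2 r + (n - 1) * f1 r / r)
      + 2 * \<beta> / (1 - m) * v r + \<beta> * (r * v1 r) = 0"
    using radial_solution_ode[OF sol Vv, folded n_def] by blast
  define y where "y s = 2 + (1 - m) / m * (exp s * f1 (exp s) / v (exp s) powr m)" for s
  note log_scale = \<open>0 < m\<close> \<open>m < 1\<close> \<open>n > 1\<close> v_pos v_deriv f_deriv f1_deriv ode
    w_def[rule_format] y_def
  show thesis
  proof (rule that, unfold_locales)
    show "0 < m / (1 - m)" "0 < \<beta> / (n - 1)" using m_pos \<open>m < 1\<close> \<beta>_pos \<open>n > 1\<close> by auto
    have "n - 2 - 2 * (m / (1 - m)) = (n - 2 - n * m) / (1 - m)" using \<open>m < 1\<close> by (simp add: field_simps)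
    thus "0 < n - 2 - 2 * (m / (1 - m))" using nm \<open>m < 1\<close> by simp
    show "0 < w s" for s using w_def v_pos[of "exp s"] by simp
    show "(w has_real_derivative w s * y s) (at s)" for s by (rule log_scale_w_deriv[OF log_scale])
    show "(y has_real_derivative - (m / (1 - m)) * (y s - 2)\<^sup>2 - (n - 2) * (y s - 2)
        - \<beta> / (n - 1) * w s * y s) (at s)" for s
      by (rule log_scale_y_deriv[OF log_scale])
    have "w = (\<lambda>s. (exp s)\<^sup>2 * v (exp s) powr (1 - m))" using w_def by auto
    with radial_log_profile_tendsto_at_bot[OF sol Vv lam_pos] show "(w \<longlongrightarrow> 0) at_bot"
      by simp
  qed
qed

lemma power2_ratio_cancel:
  fixes N P Q K \<beta> :: real
  assumes "N \<noteq> 0" "Q \<noteq> 0" "K \<noteq> 0" "\<beta> \<noteq> 0"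
  shows "(N * P / (K * \<beta>))\<^sup>2 / (2 * N * Q / (K * \<beta>)) = N * P\<^sup>2 / (2 * Q * K * \<beta>)"
  using assms by (simp add: power2_eq_square field_simps)

theorem lemma2p5:
  fixes V :: "real^'n::finite \<Rightarrow> real" and v :: "real \<Rightarrow> real"
    and m \<beta> lam :: real and n :: real
    and w h h1 :: "real \<Rightarrow> real"
  assumes n_def: "n = real CARD('n)"
    and n3: "n \<ge> 3"
    and m_pos: "0 < m" and m_lt: "m < (n - 2) / n" and m_ne: "m \<noteq> (n - 2) / (n + 2)"
    and lam_pos: "lam > 0" and beta: "\<beta> > 0"
    and sol: "radial_solution m \<beta> lam V"
    and Vv: "\<forall>x. V x = v (norm x)"
    and w_def: "\<forall>s. w s = (exp s)\<^sup>2 * v (exp s) powr (1 - m)"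
    and h_def: "\<forall>s. h s = w s - 2 * (n - 1) * (n - 2 - n * m) / ((1 - m) * \<beta>) * s"
    and h1_def: "\<forall>s. h1 s = h s + (n - 1) * (n - 2 - (n + 2) * m) / ((1 - m) * \<beta>) * ln s"
  shows "((\<lambda>s. s\<^sup>2 * deriv h1 s / ln s) \<longlongrightarrow>
           - ((n - 1) * (n - 2 - (n + 2) * m)\<^sup>2 / (2 * (n - 2 - n * m) * (1 - m) * \<beta>))) at_top"
proof -
  obtain y where "wy_system (m / (1 - m)) (\<beta> / (n - 1)) n w y"
    using radial_solution_wy_system[OF n_def m_pos m_lt lam_pos beta sol Vv w_def] by blast
  then interpret wy_system "m / (1 - m)" "\<beta> / (n - 1)" n w y .
  have "m < 1" "n > 1" "n - 2 - n * m \<noteq> 0"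
    using p_pos b_pos n_gt m_pos beta by (auto simp: zero_less_divide_iff field_simps)
  define A where "A = 2 * (n - 1) * (n - 2 - n * m) / ((1 - m) * \<beta>)"
  define B where "B = (n - 1) * (n - 2 - (n + 2) * m) / ((1 - m) * \<beta>)"
  have a0: "a0 = A" and b0: "b0 = - B"
    unfolding a0_def b0_def c0_def A_def B_def using \<open>m < 1\<close> \<open>n > 1\<close> beta
    by (simp_all add: field_simps)
  have h1_deriv: "deriv h1 s = w s * y s - A + B / s" if "s > 0" for s
  proof (rule DERIV_imp_deriv)
    have "h1 = (\<lambda>s. w s - A * s + B * ln s)" using h1_def h_def unfolding A_def B_def by auto
    thus "(h1 has_real_derivative w s * y s - A + B / s) (at s)"
      using that by (auto intro!: derivative_eq_intros w_deriv)
  qed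
  have same_eventually:
    "eventually (\<lambda>s. s\<^sup>2 * (w s * y s - a0 - b0 / s) / ln s = s\<^sup>2 * deriv h1 s / ln s) at_top"
    using eventually_gt_at_top[of 0] by eventually_elim (simp add: a0 b0 h1_deriv)
  have limit_value: "- (b0\<^sup>2 / a0)
      = - ((n - 1) * (n - 2 - (n + 2) * m)\<^sup>2 / (2 * (n - 2 - n * m) * (1 - m) * \<beta>))"
    unfolding a0 b0 A_def B_def power2_minus
    by (subst power2_ratio_cancel) (use \<open>m < 1\<close> \<open>n > 1\<close> \<open>n - 2 - n * m \<noteq> 0\<close> beta in auto)
  show ?thesis
    using Lim_transform_eventually[OF second_order_asymptotics same_eventually]
    unfolding limit_value .
qed

end
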